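(* Let $(X,d)$ be a compact metric space and let $f_1,f_2:X\to X$ be continuous. Suppose there exists $0<\lambda<1$ such that for all nonempty open sets $U,V\subset X$ there exist $x\in U$ and $y\in V$ with $d(f_i(x),f_i(y))<\lambda\, d(x,y)$ for $i=1,2$. Then the multiple mapping $F=\{f_1,f_2\}$ is (Hausdorff metric) accessible.
   Context: For the multiple mapping $F=\{f_1,f_2\}$ and $n\ge 1$, $F^n(x)=\{f_{i_1}f_{i_2}\cdots f_{i_n}(x)\mid i_1,\dots,i_n\in\{1,2\}\}$. The Hausdorff metric on nonempty compact subsets is $d_H(A,B)=\max\{\sup_{a\in A}\inf_{b\in B}d(a,b),\sup_{b\in B}\inf_{a\in A}d(a,b)\}$. $F$ is (Hausdorff metric) accessible if for every $\epsilon>0$ and all nonempty open $U,V\subset X$ there exist $x\in U$, $y\in V$ and $n\in\mathbb{Z}^+=\{1,2,\dots\}$ with $d_H(F^n(x),F^n(y))<\epsilon$. *)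

theory Defs
  imports "HOL-Analysis.Analysis"
begin

definition multi_iter :: "('a \<Rightarrow> 'a) \<Rightarrow> ('a \<Rightarrow> 'a) \<Rightarrow> nat \<Rightarrow> 'a \<Rightarrow> 'a set" where
  "multi_iter f1 f2 n x =
     {foldr (\<lambda>i y. (if i = (1::nat) then f1 else f2) y) ws x | ws. ws \<in> lists {1,2} \<and> length ws = n}"

text \<open>Hausdorff metric, as in the paper (used on nonempty compact, here finite, sets).\<close>
definition hausdorff_dist :: "'a::metric_space set \<Rightarrow> 'a set \<Rightarrow> real" where
  "hausdorff_dist A B =
     max (SUP a\<in>A. INF b\<in>B. dist a b) (SUP b\<in>B. INF a\<in>A. dist a b)"

definition hm_accessible :: "'a::metric_space set \<Rightarrow> ('a \<Rightarrow> 'a) \<Rightarrow> ('a \<Rightarrow> 'a) \<Rightarrow> bool" where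
  "hm_accessible X f1 f2 \<longleftrightarrow>
     (\<forall>\<epsilon>>0. \<forall>U V. openin (top_of_set X) U \<and> U \<noteq> {} \<and> openin (top_of_set X) V \<and> V \<noteq> {} \<longrightarrow>
        (\<exists>x\<in>U. \<exists>y\<in>V. \<exists>n::nat. n \<ge> 1 \<and>
           hausdorff_dist (multi_iter f1 f2 n x) (multi_iter f1 f2 n y) < \<epsilon>))"

end

theory Submission
  imports Defs
begin

(* Passing to the limit in the hypothesis shows that f_1 and f_2 are lam-Lipschitz on X.
   Every word map f_{i_1} o ... o f_{i_n} is then lam^n-Lipschitz, so matching the points of
   F^n(x) and F^n(y) produced by the same word gives
   d_H(F^n(x), F^n(y)) <= lam^n d(x,y), which tends to 0 for any fixed x in U and y in V. *)

lemma LIMSEQ_of_mem_shrinking_balls: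
  assumes "\<And>n. s n \<in> ball x (inverse (Suc n))"
  shows "s \<longlonglongrightarrow> x"
proof (rule tendsto_dist_iff[THEN iffD2], rule Lim_null_comparison[OF _ LIMSEQ_inverse_real_of_nat])
  show "\<forall>\<^sub>F n in sequentially. norm (dist (s n) x) \<le> inverse (real (Suc n))"
  proof (intro always_eventually allI)
    fix n
    have "dist x (s n) < inverse (Suc n)" using assms[of n] by simp
    then show "norm (dist (s n) x) \<le> inverse (real (Suc n))" by (simp add: dist_commute)
  qed
qed

lemma lipschitz_on_of_dense_contracting_pairs:
  fixes f :: "'a::metric_space \<Rightarrow> 'b::metric_space"
  assumes cont: "continuous_on X f" and "0 \<le> C"
    and dense: "\<And>U V. openin (top_of_set X) U \<Longrightarrow> U \<noteq> {} \<Longrightarrow> openin (top_of_set X) V \<Longrightarrow> V \<noteq> {}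
      \<Longrightarrow> \<exists>x\<in>U. \<exists>y\<in>V. dist (f x) (f y) < C * dist x y"
  shows "C-lipschitz_on X f"
proof (rule lipschitz_onI)
  fix x y assume "x \<in> X" "y \<in> X"
  have "\<exists>x'\<in>X \<inter> ball x (inverse (Suc n)). \<exists>y'\<in>X \<inter> ball y (inverse (Suc n)).
          dist (f x') (f y') < C * dist x' y'" for n
    using \<open>x \<in> X\<close> \<open>y \<in> X\<close> by (intro dense openin_open_Int) auto
  then obtain xs ys where xs: "\<And>n. xs n \<in> X \<inter> ball x (inverse (Suc n))"
    and ys: "\<And>n. ys n \<in> X \<inter> ball y (inverse (Suc n))"
    and contracting: "\<And>n. dist (f (xs n)) (f (ys n)) < C * dist (xs n) (ys n)"
    by metis
  have "xs \<longlonglongrightarrow> x" "ys \<longlonglongrightarrow> y"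
    using xs ys by (auto intro: LIMSEQ_of_mem_shrinking_balls)
  have "(\<lambda>n. f (xs n)) \<longlonglongrightarrow> f x" "(\<lambda>n. f (ys n)) \<longlonglongrightarrow> f y"
    using xs ys \<open>x \<in> X\<close> \<open>y \<in> X\<close> \<open>xs \<longlonglongrightarrow> x\<close> \<open>ys \<longlonglongrightarrow> y\<close>
    by (auto intro!: continuous_on_tendsto_compose[OF cont] always_eventually)
  show "dist (f x) (f y) \<le> C * dist x y"
  proof (rule tendsto_le[OF trivial_limit_sequentially])
    show "(\<lambda>n. C * dist (xs n) (ys n)) \<longlonglongrightarrow> C * dist x y"
      by (intro tendsto_intros) fact+
    show "(\<lambda>n. dist (f (xs n)) (f (ys n))) \<longlonglongrightarrow> dist (f x) (f y)"
      by (intro tendsto_intros) fact+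
    show "\<forall>\<^sub>F n in sequentially. dist (f (xs n)) (f (ys n)) \<le> C * dist (xs n) (ys n)"
      using contracting by (simp add: less_imp_le)
  qed
qed (fact \<open>0 \<le> C\<close>)

lemma foldr_image_subset:
  assumes "\<And>i. i \<in> set ws \<Longrightarrow> g i ` X \<subseteq> X"
  shows "foldr g ws ` X \<subseteq> X"
  using assms by (induction ws) auto

lemma lipschitz_on_foldr:
  assumes "\<And>i. i \<in> set ws \<Longrightarrow> g i ` X \<subseteq> X"
    and "\<And>i. i \<in> set ws \<Longrightarrow> C-lipschitz_on X (g i)"
  shows "(C ^ length ws)-lipschitz_on X (foldr g ws)"
  using assms
proof (induction ws)
  case Nil
  then show ?case using lipschitz_on_id by simp
next
  case (Cons i ws)
  have "C-lipschitz_on (foldr g ws ` X) (g i)"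
    using Cons.prems foldr_image_subset[of ws g X] by (meson lipschitz_on_subset list.set_intros)
  moreover have "(C ^ length ws)-lipschitz_on X (foldr g ws)"
    using Cons by simp
  ultimately have "(C * C ^ length ws)-lipschitz_on X (g i \<circ> foldr g ws)"
    by (rule lipschitz_on_compose[rotated])
  then show ?case by simp
qed

lemma SUP_INF_dist_image_le:
  assumes "A \<noteq> {}" and "\<And>a. a \<in> A \<Longrightarrow> dist (\<phi> a) (\<psi> a) \<le> r"
  shows "(SUP p\<in>\<phi> ` A. INF q\<in>\<psi> ` A. dist p q) \<le> r"
proof (rule cSUP_least)
  fix p assume "p \<in> \<phi> ` A"
  then obtain a where "a \<in> A" "p = \<phi> a" by blast
  have "(INF q\<in>\<psi> ` A. dist p q) \<le> dist p (\<psi> a)"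
    using \<open>a \<in> A\<close> by (intro cINF_lower bdd_belowI[of _ 0]) auto
  also have "\<dots> \<le> r" using assms(2) \<open>a \<in> A\<close> \<open>p = \<phi> a\<close> by simp
  finally show "(INF q\<in>\<psi> ` A. dist p q) \<le> r" .
qed (use assms(1) in simp)

lemma hausdorff_dist_image_le:
  assumes "A \<noteq> {}" and "\<And>a. a \<in> A \<Longrightarrow> dist (\<phi> a) (\<psi> a) \<le> r"
  shows "hausdorff_dist (\<phi> ` A) (\<psi> ` A) \<le> r"
  unfolding hausdorff_dist_def
  using assms SUP_INF_dist_image_le[of A \<phi> \<psi> r] SUP_INF_dist_image_le[of A \<psi> \<phi> r]
  by (simp add: dist_commute)

lemma multi_iter_eq_image_words:
  "multi_iter f1 f2 n x =
     (\<lambda>ws. foldr (\<lambda>i. if i = 1 then f1 else f2) ws x) ` {ws \<in> lists {1, 2::nat}. length ws = n}"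
  by (auto simp: multi_iter_def)

lemma hausdorff_dist_multi_iter_le:
  assumes "f1 ` X \<subseteq> X" "f2 ` X \<subseteq> X" "C-lipschitz_on X f1" "C-lipschitz_on X f2"
    and "x \<in> X" "y \<in> X"
  shows "hausdorff_dist (multi_iter f1 f2 n x) (multi_iter f1 f2 n y) \<le> C ^ n * dist x y"
  unfolding multi_iter_eq_image_words
proof (rule hausdorff_dist_image_le)
  have "replicate n 1 \<in> {ws \<in> lists {1, 2::nat}. length ws = n}" by auto
  then show "{ws \<in> lists {1, 2::nat}. length ws = n} \<noteq> {}" by blast
next
  fix ws assume "ws \<in> {ws \<in> lists {1, 2::nat}. length ws = n}"
  then have "(C ^ n)-lipschitz_on X (foldr (\<lambda>i. if i = 1 then f1 else f2) ws)"
    using assms(1-4) lipschitz_on_foldr[of ws "\<lambda>i. if i = 1 then f1 else f2" X C] by auto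
  then show "dist (foldr (\<lambda>i. if i = 1 then f1 else f2) ws x)
      (foldr (\<lambda>i. if i = 1 then f1 else f2) ws y) \<le> C ^ n * dist x y"
    using assms(5,6) by (rule lipschitz_onD)
qed

lemma hm_accessible_if_contracting:
  assumes "\<bar>C\<bar> < 1"
    and contracting: "\<And>x y n. x \<in> X \<Longrightarrow> y \<in> X \<Longrightarrow>
      hausdorff_dist (multi_iter f1 f2 n x) (multi_iter f1 f2 n y) \<le> C ^ n * dist x y"
  shows "hm_accessible X f1 f2"
  unfolding hm_accessible_def
proof (intro allI impI)
  fix \<epsilon> :: real and U V
  assume "\<epsilon> > 0"
    and UV: "openin (top_of_set X) U \<and> U \<noteq> {} \<and> openin (top_of_set X) V \<and> V \<noteq> {}"
  then obtain x y where "x \<in> U" "y \<in> V" by blast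
  then have "x \<in> X" "y \<in> X" using UV openin_imp_subset by blast+
  have "(\<lambda>n. C ^ n * dist x y) \<longlonglongrightarrow> 0"
    using \<open>\<bar>C\<bar> < 1\<close> by (intro tendsto_mult_left_zero LIMSEQ_power_zero) simp
  then have "\<forall>\<^sub>F n in sequentially. C ^ n * dist x y < \<epsilon>"
    using \<open>\<epsilon> > 0\<close> by (rule order_tendstoD(2))
  then obtain N where N: "\<forall>n\<ge>N. C ^ n * dist x y < \<epsilon>"
    unfolding eventually_sequentially by blast
  have "hausdorff_dist (multi_iter f1 f2 (Suc N) x) (multi_iter f1 f2 (Suc N) y) < \<epsilon>"
    using contracting[OF \<open>x \<in> X\<close> \<open>y \<in> X\<close>, of "Suc N"] N
    by (meson le_SucI order_le_less_trans order_refl)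
  then show "\<exists>x\<in>U. \<exists>y\<in>V. \<exists>n. 1 \<le> n \<and>
      hausdorff_dist (multi_iter f1 f2 n x) (multi_iter f1 f2 n y) < \<epsilon>"
    using \<open>x \<in> U\<close> \<open>y \<in> V\<close> by (intro bexI exI[of _ "Suc N"]) auto
qed

theorem theorem3p9:
  fixes X :: "'a::metric_space set" and f1 f2 :: "'a \<Rightarrow> 'a" and lam :: real
  assumes "compact X"
    and "continuous_on X f1" and "f1 ` X \<subseteq> X"
    and "continuous_on X f2" and "f2 ` X \<subseteq> X"
    and "0 < lam" and "lam < 1"
    and "\<forall>U V. openin (top_of_set X) U \<and> U \<noteq> {} \<and> openin (top_of_set X) V \<and> V \<noteq> {} \<longrightarrow>
           (\<exists>x\<in>U. \<exists>y\<in>V. dist (f1 x) (f1 y) < lam * dist x y \<and> dist (f2 x) (f2 y) < lam * dist x y)"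
  shows "hm_accessible X f1 f2"
proof -
  have "lam-lipschitz_on X f1"
    by (rule lipschitz_on_of_dense_contracting_pairs[OF assms(2) less_imp_le[OF assms(6)]])
      (use assms(8) in blast)
  moreover have "lam-lipschitz_on X f2"
    by (rule lipschitz_on_of_dense_contracting_pairs[OF assms(4) less_imp_le[OF assms(6)]])
      (use assms(8) in blast)
  ultimately show ?thesis
    using assms(3,5-7)
    by (intro hm_accessible_if_contracting[of lam] hausdorff_dist_multi_iter_le) auto
qed

end
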